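(* Let $G$ be a graph with a perfect ordering $\{B_1,\dots,B_k\}$ of its prime components, and let $f:\mathbb{R}\to\mathbb{R}$ satisfy $f(0)=0$. Define $s:=\max_{i}|S_i|$, where $S_i:=(B_1\cup\dots\cup B_{i-1})\cap B_i$. If $f[-]$ preserves positivity on $\mathcal{P}_{G_{B_i}}$ for all $1\le i\le k$ and is Loewner super-additive on $\mathcal{P}_{K_s}$, then $f[-]$ preserves positivity on $\mathcal{P}_G$.
   Context: Graphs are finite and simple; $G_U$ is the subgraph induced on $U$; $K_s$ is the complete graph on $s$ vertices. A decomposition of $G=(V,E)$ is a partition $(A,C,B)$ of $V$ with $A,B$ nonempty such that every path from $A$ to $B$ meets $C$ and $G_C$ is complete; $G$ is prime if it admits no decomposition. Decomposing $G$ into $G_{A\cup C}$ and $G_{B\cup C}$ and iterating until no further decomposition is possible yields the prime components of $G$ (vertex subsets inducing prime graphs). For subsets $B_1,\dots,B_k$, with $H_j=B_1\cup\dots\cup B_j$, $H_0=\emptyset$, $S_j=H_{j-1}\cap B_j$, the sequence is a perfect ordering if for every $1<i\le k$ there is $j<i$ with $S_i\subset B_j$, and each $S_i$ induces a complete graph. For a graph $H$ on $\{1,\dots,n\}$, $\mathcal{P}_H$ is the set of real symmetric PSD $n\times n$ matrices $M$ with $m_{ij}=0$ for $i\ne j$ non-adjacent. $f[M]:=(f(m_{ij}))$; $f[-]$ preserves positivity on $\mathcal{P}_H$ if $f[M]\in\mathcal{P}_H$ for all $M\in\mathcal{P}_H$; it is Loewner super-additive on $\mathcal{P}_H$ if $f[M+N]-f[M]-f[N]\in\mathcal{P}_H$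 for all $M,N\in\mathcal{P}_H$. *)

theory Defs
  imports Complex_Main
begin

definition simple_graph :: "'a set \<Rightarrow> ('a \<Rightarrow> 'a \<Rightarrow> bool) \<Rightarrow> bool" where
  "simple_graph V E \<longleftrightarrow> finite V \<and>
     (\<forall>x y. E x y \<longrightarrow> x \<in> V \<and> y \<in> V \<and> x \<noteq> y \<and> E y x)"

definition clique :: "('a \<Rightarrow> 'a \<Rightarrow> bool) \<Rightarrow> 'a set \<Rightarrow> bool" where
  "clique E C \<longleftrightarrow> (\<forall>x\<in>C. \<forall>y\<in>C. x \<noteq> y \<longrightarrow> E x y)"

definition is_path :: "('a \<Rightarrow> 'a \<Rightarrow> bool) \<Rightarrow> 'a set \<Rightarrow> 'a list \<Rightarrow> bool" where
  "is_path E U xs \<longleftrightarrow> xs \<noteq> [] \<and> distinct xs \<and> set xs \<subseteq> U \<and>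
     (\<forall>i. Suc i < length xs \<longrightarrow> E (xs ! i) (xs ! Suc i))"

definition decomposition :: "('a \<Rightarrow> 'a \<Rightarrow> bool) \<Rightarrow> 'a set \<Rightarrow> 'a set \<Rightarrow> 'a set \<Rightarrow> 'a set \<Rightarrow> bool" where
  "decomposition E U A C B \<longleftrightarrow>
     A \<union> C \<union> B = U \<and> A \<inter> C = {} \<and> A \<inter> B = {} \<and> C \<inter> B = {} \<and>
     A \<noteq> {} \<and> B \<noteq> {} \<and>
     (\<forall>xs. is_path E U xs \<and> hd xs \<in> A \<and> last xs \<in> B \<longrightarrow> set xs \<inter> C \<noteq> {}) \<and>
     clique E C"

definition prime_graph :: "('a \<Rightarrow> 'a \<Rightarrow> bool) \<Rightarrow> 'a set \<Rightarrow> bool" where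
  "prime_graph E U \<longleftrightarrow> \<not> (\<exists>A C B. decomposition E U A C B)"

inductive prime_comps :: "('a \<Rightarrow> 'a \<Rightarrow> bool) \<Rightarrow> 'a set \<Rightarrow> 'a set set \<Rightarrow> bool"
  for E where
  base: "prime_graph E U \<Longrightarrow> prime_comps E U {U}"
| step: "decomposition E U A C B \<Longrightarrow> prime_comps E (A \<union> C) P1 \<Longrightarrow>
         prime_comps E (B \<union> C) P2 \<Longrightarrow> prime_comps E U (P1 \<union> P2)"

text \<open>S_i for 0-based index i: (B_0 \<union> ... \<union> B_(i-1)) \<inter> B_i.\<close>
definition sep_set :: "'a set list \<Rightarrow> nat \<Rightarrow> 'a set" where
  "sep_set Bs i = (\<Union>j<i. Bs ! j) \<inter> Bs ! i"

definition perfect_ordering :: "('a \<Rightarrow> 'a \<Rightarrow> bool) \<Rightarrow> 'a set list \<Rightarrow> bool" where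
  "perfect_ordering E Bs \<longleftrightarrow>
     (\<forall>i<length Bs. clique E (sep_set Bs i) \<and> (0 < i \<longrightarrow> (\<exists>j<i. sep_set Bs i \<subseteq> Bs ! j)))"

definition max_sep :: "'a set list \<Rightarrow> nat" where
  "max_sep Bs = Max ((\<lambda>i. card (sep_set Bs i)) ` {..<length Bs})"

definition psd_on :: "'i set \<Rightarrow> ('i \<Rightarrow> 'i \<Rightarrow> real) \<Rightarrow> bool" where
  "psd_on I M \<longleftrightarrow> (\<forall>i\<in>I. \<forall>j\<in>I. M i j = M j i) \<and>
     (\<forall>x :: 'i \<Rightarrow> real. 0 \<le> (\<Sum>i\<in>I. \<Sum>j\<in>I. x i * M i j * x j))"

definition PH :: "'i set \<Rightarrow> ('i \<Rightarrow> 'i \<Rightarrow> bool) \<Rightarrow> ('i \<Rightarrow> 'i \<Rightarrow> real) \<Rightarrow> bool" where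
  "PH I E M \<longleftrightarrow> psd_on I M \<and> (\<forall>i\<in>I. \<forall>j\<in>I. i \<noteq> j \<and> \<not> E i j \<longrightarrow> M i j = 0)"

definition entrywise :: "(real \<Rightarrow> real) \<Rightarrow> ('i \<Rightarrow> 'i \<Rightarrow> real) \<Rightarrow> ('i \<Rightarrow> 'i \<Rightarrow> real)" where
  "entrywise f M = (\<lambda>i j. f (M i j))"

definition preserves_positivity :: "'i set \<Rightarrow> ('i \<Rightarrow> 'i \<Rightarrow> bool) \<Rightarrow> (real \<Rightarrow> real) \<Rightarrow> bool" where
  "preserves_positivity I E f \<longleftrightarrow> (\<forall>M. PH I E M \<longrightarrow> PH I E (entrywise f M))"

definition loewner_superadditive :: "'i set \<Rightarrow> ('i \<Rightarrow> 'i \<Rightarrow> bool) \<Rightarrow> (real \<Rightarrow> real) \<Rightarrow> bool" where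
  "loewner_superadditive I E f \<longleftrightarrow>
     (\<forall>M N. PH I E M \<and> PH I E N \<longrightarrow>
        PH I E (\<lambda>i j. entrywise f (\<lambda>a b. M a b + N a b) i j - entrywise f M i j - entrywise f N i j))"

definition complete_adj :: "nat \<Rightarrow> nat \<Rightarrow> bool" where
  "complete_adj i j \<longleftrightarrow> i \<noteq> j"

end

theory Submission
  imports Defs
begin

text \<open>
  The perfect ordering adds the prime components one at a time, and at step \<open>i\<close> the graph
  built so far and the new component \<open>B\<^sub>i\<close> overlap in the clique \<open>S\<^sub>i\<close> and have no edges
  between \<open>H\<^sub>i\<^sub>-\<^sub>1 - B\<^sub>i\<close> and \<open>B\<^sub>i - H\<^sub>i\<^sub>-\<^sub>1\<close>.  For such a two-block pattern, peeling off the
  vertices of \<open>H\<^sub>i\<^sub>-\<^sub>1 - B\<^sub>i\<close> one Schur complement at a time writes every positive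
  semidefinite \<open>M\<close> with the zero pattern of the union as \<open>M\<^sub>1 + M\<^sub>2\<close>, with \<open>M\<^sub>1, M\<^sub>2\<close>
  positive semidefinite with the zero patterns of the two pieces.  Since \<open>f 0 = 0\<close>,
  \<open>f[M] = f[M\<^sub>1] + f[M\<^sub>2] + (f[M\<^sub>1 + M\<^sub>2] - f[M\<^sub>1] - f[M\<^sub>2])\<close>, where the first two terms are
  positive by induction and by hypothesis on \<open>B\<^sub>i\<close>, and the last one is supported on the
  clique \<open>S\<^sub>i\<close>, hence positive by super-additivity on \<open>K\<^sub>s\<close>.
\<close>

section \<open>Positive semidefinite matrices indexed by finite sets\<close>

definition quad_form :: "'i set \<Rightarrow> ('i \<Rightarrow> 'i \<Rightarrow> real) \<Rightarrow> ('i \<Rightarrow> real) \<Rightarrow> real" where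
  "quad_form I M x = (\<Sum>i\<in>I. \<Sum>j\<in>I. x i * M i j * x j)"

lemma psd_on_iff_quad_form:
  "psd_on I M \<longleftrightarrow> (\<forall>i\<in>I. \<forall>j\<in>I. M i j = M j i) \<and> (\<forall>x. 0 \<le> quad_form I M x)"
  unfolding psd_on_def quad_form_def by simp

lemma double_sum_mono_neutral:
  fixes g :: "'i \<Rightarrow> 'i \<Rightarrow> real"
  assumes "finite J" "I \<subseteq> J" "\<forall>i\<in>J. \<forall>j\<in>J. \<not> (i \<in> I \<and> j \<in> I) \<longrightarrow> g i j = 0"
  shows "(\<Sum>i\<in>J. \<Sum>j\<in>J. g i j) = (\<Sum>i\<in>I. \<Sum>j\<in>I. g i j)"
proof -
  have "(\<Sum>i\<in>J. \<Sum>j\<in>J. g i j) = (\<Sum>i\<in>I. \<Sum>j\<in>J. g i j)"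
    by (rule sum.mono_neutral_right) (use assms in auto)
  also have "\<dots> = (\<Sum>i\<in>I. \<Sum>j\<in>I. g i j)"
    by (intro sum.cong refl sum.mono_neutral_right) (use assms in auto)
  finally show ?thesis .
qed

lemma psd_on_subset:
  assumes "psd_on J M" "finite J" "I \<subseteq> J"
  shows "psd_on I M"
  unfolding psd_on_iff_quad_form
proof (intro conjI allI)
  show "\<forall>i\<in>I. \<forall>j\<in>I. M i j = M j i"
    using assms unfolding psd_on_iff_quad_form by blast
  fix x :: "_ \<Rightarrow> real"
  define x' where "x' i = (if i \<in> I then x i else 0)" for i
  have "quad_form I M x = quad_form I M x'"
    unfolding quad_form_def x'_def by (intro sum.cong) auto
  also have "\<dots> = quad_form J M x'"
    unfolding quad_form_def
    by (rule double_sum_mono_neutral[symmetric]) (use assms in \<open>auto simp: x'_def\<close>)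
  finally show "0 \<le> quad_form I M x"
    using assms(1) unfolding psd_on_iff_quad_form by simp
qed

lemma psd_on_zero_extend:
  assumes "psd_on I M" "finite J" "I \<subseteq> J"
    and "\<forall>i\<in>J. \<forall>j\<in>J. \<not> (i \<in> I \<and> j \<in> I) \<longrightarrow> M i j = 0"
  shows "psd_on J M"
  unfolding psd_on_iff_quad_form
proof (intro conjI allI)
  show "\<forall>i\<in>J. \<forall>j\<in>J. M i j = M j i"
    using assms unfolding psd_on_iff_quad_form by metis
  fix x :: "_ \<Rightarrow> real"
  have "quad_form J M x = quad_form I M x"
    unfolding quad_form_def by (rule double_sum_mono_neutral) (use assms in auto)
  then show "0 \<le> quad_form J M x"
    using assms(1) unfolding psd_on_iff_quad_form by simp
qed

lemma psd_on_cong: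
  assumes "psd_on I M" "\<forall>i\<in>I. \<forall>j\<in>I. M i j = N i j"
  shows "psd_on I N"
proof -
  have "quad_form I N x = quad_form I M x" for x
    unfolding quad_form_def using assms(2) by (intro sum.cong) auto
  then show ?thesis
    using assms unfolding psd_on_iff_quad_form by metis
qed

lemma psd_on_add:
  assumes "psd_on I A" "psd_on I B"
  shows "psd_on I (\<lambda>i j. A i j + B i j)"
proof -
  have "quad_form I (\<lambda>i j. A i j + B i j) x = quad_form I A x + quad_form I B x" for x
    unfolding quad_form_def by (simp add: algebra_simps sum.distrib)
  then show ?thesis
    using assms unfolding psd_on_iff_quad_form by (metis add_nonneg_nonneg)
qed

lemma psd_on_rank_one:
  assumes "0 \<le> c"
  shows "psd_on I (\<lambda>i j. c * w i * w j)"
  unfolding psd_on_iff_quad_form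
proof (intro conjI allI)
  show "\<forall>i\<in>I. \<forall>j\<in>I. c * w i * w j = c * w j * w i"
    by simp
  fix x :: "_ \<Rightarrow> real"
  have "quad_form I (\<lambda>i j. c * w i * w j) x = c * (\<Sum>i\<in>I. w i * x i) * (\<Sum>j\<in>I. w j * x j)"
    unfolding quad_form_def by (simp add: sum_product sum_distrib_left algebra_simps)
  then show "0 \<le> quad_form I (\<lambda>i j. c * w i * w j) x"
    using assms by (simp add: mult.assoc)
qed

lemma psd_on_reindex:
  assumes "bij_betw g S T" "psd_on T N"
  shows "psd_on S (\<lambda>u v. N (g u) (g v))"
  unfolding psd_on_iff_quad_form
proof (intro conjI allI)
  show "\<forall>u\<in>S. \<forall>v\<in>S. N (g u) (g v) = N (g v) (g u)"
    using assms bij_betwE unfolding psd_on_iff_quad_form by metis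
  fix x :: "_ \<Rightarrow> real"
  define h where "h = inv_into S g"
  have hg: "h (g u) = u" if "u \<in> S" for u
    using assms(1) that unfolding h_def by (simp add: bij_betw_inv_into_left)
  have "quad_form T N (\<lambda>t. x (h t)) = (\<Sum>u\<in>S. \<Sum>j\<in>T. x (h (g u)) * N (g u) j * x (h j))"
    unfolding quad_form_def by (rule sum.reindex_bij_betw[OF assms(1), symmetric])
  also have "\<dots> = (\<Sum>u\<in>S. \<Sum>v\<in>S. x (h (g u)) * N (g u) (g v) * x (h (g v)))"
    by (rule sum.cong[OF refl], rule sum.reindex_bij_betw[OF assms(1), symmetric])
  also have "\<dots> = quad_form S (\<lambda>u v. N (g u) (g v)) x"
    unfolding quad_form_def by (intro sum.cong) (auto simp: hg)
  finally show "0 \<le> quad_form S (\<lambda>u v. N (g u) (g v)) x"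
    using assms(2) unfolding psd_on_iff_quad_form by metis
qed

lemma quad_form_insert:
  assumes "finite I" "a \<notin> I" "\<forall>j\<in>I. M j a = M a j"
  shows "quad_form (insert a I) M x
    = quad_form I M x + 2 * x a * (\<Sum>j\<in>I. M a j * x j) + x a * M a a * x a"
proof -
  have "quad_form (insert a I) M x = (x a * M a a * x a + (\<Sum>j\<in>I. x a * M a j * x j)) +
      (\<Sum>i\<in>I. x i * M i a * x a + (\<Sum>j\<in>I. x i * M i j * x j))"
    unfolding quad_form_def using assms by (simp add: sum.insert)
  also have "(\<Sum>i\<in>I. x i * M i a * x a + (\<Sum>j\<in>I. x i * M i j * x j)) =
      (\<Sum>i\<in>I. x a * M a i * x i) + quad_form I M x"
    unfolding quad_form_def using assms(3) by (simp add: sum.distrib algebra_simps)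
  also have "(\<Sum>j\<in>I. x a * M a j * x j) = x a * (\<Sum>j\<in>I. M a j * x j)"
    by (simp add: sum_distrib_left algebra_simps)
  finally show ?thesis by (simp add: algebra_simps)
qed

lemma psd_on_diag_nonneg:
  assumes "psd_on U M" "finite U" "a \<in> U"
  shows "0 \<le> M a a"
proof -
  have "psd_on {a} M"
    using psd_on_subset[OF assms(1,2)] assms(3) by simp
  then have "0 \<le> quad_form {a} M (\<lambda>_. 1)"
    unfolding psd_on_iff_quad_form by blast
  then show ?thesis
    unfolding quad_form_def by simp
qed

lemma psd_on_diag_zero_row:
  assumes "psd_on U M" "finite U" "a \<in> U" "v \<in> U" "M a a = 0"
  shows "M a v = 0"
proof (cases "v = a")
  case True
  then show ?thesis using assms by simp
next
  case False
  have psd: "psd_on {a, v} M"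
    using psd_on_subset[OF assms(1,2)] assms(3,4) by simp
  have sym: "M v a = M a v"
    using assms(1,3,4) unfolding psd_on_def by blast
  show ?thesis
  proof (rule ccontr)
    assume ne: "M a v \<noteq> 0"
    define t where "t = - (M v v + 1) / (2 * M a v)"
    define x where "x i = (if i = a then t else if i = v then 1 else 0)" for i :: 'a
    have "0 \<le> quad_form {a, v} M x"
      using psd unfolding psd_on_iff_quad_form by blast
    also have "quad_form {a, v} M x = 2 * t * M a v + M v v"
      unfolding quad_form_def x_def using False sym assms(5) by (simp add: algebra_simps)
    also have "\<dots> = -1"
      unfolding t_def using ne by (simp add: field_simps)
    finally show False by simp
  qed
qed

lemma psd_on_schur_complement:
  assumes "psd_on U M" "finite U" "a \<in> U"
  shows "psd_on (U - {a}) (\<lambda>u v. M u v - M a u * M a v / M a a)"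
  unfolding psd_on_iff_quad_form
proof (intro conjI allI)
  have symmetric: "\<forall>i\<in>U. \<forall>j\<in>U. M i j = M j i"
    using assms(1) unfolding psd_on_def by blast
  then show "\<forall>u\<in>U - {a}. \<forall>v\<in>U - {a}. M u v - M a u * M a v / M a a = M v u - M a v * M a u / M a a"
    by (simp add: mult.commute)
  fix x :: "_ \<Rightarrow> real"
  define U' where "U' = U - {a}"
  define p where "p = M a a"
  define c where "c = (\<Sum>v\<in>U'. M a v * x v)"
  have fin': "finite U'" and U': "U = insert a U'" "a \<notin> U'"
    using assms unfolding U'_def by auto
  have row_sym: "\<forall>j\<in>U'. M j a = M a j"
    using symmetric assms(3) unfolding U'_def by blast
  have "quad_form U' (\<lambda>u v. M u v - M a u * M a v / p) x
      = (\<Sum>u\<in>U'. \<Sum>v\<in>U'. x u * M u v * x v - (M a u * x u) * (M a v * x v) / p)"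
    unfolding quad_form_def by (intro sum.cong refl) (simp add: algebra_simps)
  also have "\<dots> = quad_form U' M x - (\<Sum>u\<in>U'. \<Sum>v\<in>U'. (M a u * x u) * (M a v * x v) / p)"
    unfolding quad_form_def by (simp only: sum_subtractf)
  also have "(\<Sum>u\<in>U'. \<Sum>v\<in>U'. (M a u * x u) * (M a v * x v) / p) = c * c / p"
    unfolding c_def by (simp add: sum_product sum_divide_distrib)
  finally have qf: "quad_form U' (\<lambda>u v. M u v - M a u * M a v / p) x = quad_form U' M x - c * c / p" .
  have "0 \<le> quad_form U' M x - c * c / p"
  proof (cases "p = 0")
    case True
    have "psd_on U' M"
      using psd_on_subset[OF assms(1,2)] unfolding U'_def by blast
    then show ?thesis
      using True unfolding psd_on_iff_quad_form by simp
  next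
    case False
    with psd_on_diag_nonneg[OF assms] have pos: "0 < p"
      unfolding p_def by simp
    \<comment> \<open>test the form of \<open>M\<close> on \<open>x\<close> extended by the minimising value at \<open>a\<close>\<close>
    define y where "y = x(a := - c / p)"
    have "0 \<le> quad_form U M y"
      using assms(1) unfolding psd_on_iff_quad_form by blast
    also have "quad_form U M y = quad_form U' M y + 2 * y a * (\<Sum>j\<in>U'. M a j * y j) + y a * p * y a"
      unfolding U'(1) p_def by (rule quad_form_insert[OF fin' U'(2) row_sym])
    also have "quad_form U' M y = quad_form U' M x"
      unfolding quad_form_def y_def using U'(2) by (intro sum.cong) auto
    also have "(\<Sum>j\<in>U'. M a j * y j) = c"
      unfolding c_def y_def using U'(2) by (intro sum.cong) auto
    also have "quad_form U' M x + 2 * y a * c + y a * p * y a = quad_form U' M x - c * c / p"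
      unfolding y_def using pos by (simp add: field_simps)
    finally show ?thesis .
  qed
  then show "0 \<le> quad_form (U - {a}) (\<lambda>u v. M u v - M a u * M a v / M a a) x"
    using qf unfolding U'_def p_def by simp
qed

text \<open>
  The witness is the rank-one matrix \<open>M a u * M a v / M a a\<close> (restricted to \<open>X\<close>); if
  \<open>M a a = 0\<close> it is zero since \<open>inverse 0 = 0\<close>, as it should be because row \<open>a\<close> then vanishes.
\<close>
lemma psd_on_peel_vertex:
  assumes "psd_on U M" "finite U" "a \<in> U" "a \<in> X" "\<forall>v\<in>U - X. M a v = 0"
  obtains R where "psd_on U R" "\<forall>u v. u \<notin> X \<or> v \<notin> X \<longrightarrow> R u v = 0"
    "\<forall>v\<in>U. R a v = M a v \<and> R v a = M v a" "psd_on (U - {a}) (\<lambda>u v. M u v - R u v)"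
proof -
  define w where "w u = (if u \<in> X then M a u else 0)" for u
  define R where "R u v = inverse (M a a) * w u * w v" for u v
  have w: "w u = M a u" if "u \<in> U" for u
    using assms(5) that unfolding w_def by auto
  have row: "R a v = M a v" if "v \<in> U" for v
  proof (cases "M a a = 0")
    case True
    then show ?thesis
      using psd_on_diag_zero_row[OF assms(1-3) that] unfolding R_def by simp
  next
    case False
    then show ?thesis
      using w[OF that] assms(4) unfolding R_def w_def by simp
  qed
  have "R v a = M v a" if "v \<in> U" for v
  proof -
    have "R v a = R a v"
      unfolding R_def by (simp add: mult_ac)
    also have "\<dots> = M a v"
      by (rule row[OF that])
    also have "\<dots> = M v a"
      using assms(1,3) that unfolding psd_on_def by blast
    finally show ?thesis .
  qed
  moreover have "psd_on U R"
    unfolding R_def by (rule psd_on_rank_one) (use psd_on_diag_nonneg[OF assms(1-3)] in simp)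
  moreover have "psd_on (U - {a}) (\<lambda>u v. M u v - R u v)"
    by (rule psd_on_cong[OF psd_on_schur_complement[OF assms(1-3)]])
      (auto simp: R_def w divide_inverse)
  ultimately show ?thesis
    using that row unfolding R_def w_def by auto
qed

text \<open>
  Peeling off the vertices of \<open>X - Y\<close> one at a time keeps the block between \<open>X - Y\<close> and
  \<open>Y - X\<close> zero, because each peeled rank-one term is supported on \<open>X\<close>.
\<close>
lemma psd_on_split:
  assumes "finite X" "finite Y" "psd_on (X \<union> Y) M" "\<forall>u\<in>X - Y. \<forall>v\<in>Y - X. M u v = 0"
  shows "\<exists>M1 M2. psd_on (X \<union> Y) M1 \<and> psd_on (X \<union> Y) M2 \<and>
    (\<forall>u v. u \<notin> X \<or> v \<notin> X \<longrightarrow> M1 u v = 0) \<and> (\<forall>u v. u \<notin> Y \<or> v \<notin> Y \<longrightarrow> M2 u v = 0) \<and>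
    (\<forall>u\<in>X \<union> Y. \<forall>v\<in>X \<union> Y. M u v = M1 u v + M2 u v)"
  using assms
proof (induction "card (X - Y)" arbitrary: X M)
  case 0
  then have XY: "X \<subseteq> Y" by auto
  define M2 where "M2 u v = (if u \<in> Y \<and> v \<in> Y then M u v else 0)" for u v
  have "psd_on (X \<union> Y) M2"
    using "0.prems"(3) unfolding M2_def by (rule psd_on_cong) (use XY in auto)
  then show ?case
    using XY by (intro exI[of _ "\<lambda>u v. 0"] exI[of _ M2]) (auto simp: psd_on_def M2_def)
next
  case (Suc n)
  then obtain a where a: "a \<in> X" "a \<notin> Y"
    by (metis Diff_iff card.empty ex_in_conv nat.distinct(1))
  define U where "U = X \<union> Y"
  define X' where "X' = X - {a}"
  have finU: "finite U" and U': "X' \<union> Y = U - {a}" "X' \<union> Y \<subseteq> U" "a \<notin> X' \<union> Y"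
    using Suc.prems(1,2) a unfolding U_def X'_def by auto
  obtain R where R: "psd_on U R" "\<forall>u v. u \<notin> X \<or> v \<notin> X \<longrightarrow> R u v = 0"
    "\<forall>v\<in>U. R a v = M a v \<and> R v a = M v a" "psd_on (U - {a}) (\<lambda>u v. M u v - R u v)"
    using psd_on_peel_vertex[OF Suc.prems(3)[folded U_def] finU, of a X] Suc.prems(4) a
    unfolding U_def by blast
  define M' where "M' u v = M u v - R u v" for u v
  have "n = card (X' - Y)"
    using Suc.hyps(2) Suc.prems(1) a unfolding X'_def by (simp add: Diff_insert2 [symmetric])
  moreover have "finite X'"
    using Suc.prems(1) unfolding X'_def by blast
  moreover have "psd_on (X' \<union> Y) M'"
    using R(4) unfolding U'(1) M'_def .
  moreover have "\<forall>u\<in>X' - Y. \<forall>v\<in>Y - X'. M' u v = 0"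
  proof (intro ballI)
    fix u v
    assume "u \<in> X' - Y" "v \<in> Y - X'"
    then have "u \<in> X - Y" "v \<in> Y - X"
      using a unfolding X'_def by auto
    then show "M' u v = 0"
      using Suc.prems(4) R(2) unfolding M'_def by simp
  qed
  ultimately have "\<exists>M1 M2. psd_on (X' \<union> Y) M1 \<and> psd_on (X' \<union> Y) M2 \<and>
    (\<forall>u v. u \<notin> X' \<or> v \<notin> X' \<longrightarrow> M1 u v = 0) \<and> (\<forall>u v. u \<notin> Y \<or> v \<notin> Y \<longrightarrow> M2 u v = 0) \<and>
    (\<forall>u\<in>X' \<union> Y. \<forall>v\<in>X' \<union> Y. M' u v = M1 u v + M2 u v)"
    by (rule Suc.hyps(1)[OF _ _ Suc.prems(2)])
  then obtain M1 M2 where IH: "psd_on (X' \<union> Y) M1" "psd_on (X' \<union> Y) M2"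
    "\<forall>u v. u \<notin> X' \<or> v \<notin> X' \<longrightarrow> M1 u v = 0" "\<forall>u v. u \<notin> Y \<or> v \<notin> Y \<longrightarrow> M2 u v = 0"
    "\<forall>u\<in>X' \<union> Y. \<forall>v\<in>X' \<union> Y. M' u v = M1 u v + M2 u v"
    by blast
  have decomp: "M u v = (R u v + M1 u v) + M2 u v" if "u \<in> U" "v \<in> U" for u v
  proof (cases "u = a \<or> v = a")
    case True
    then show ?thesis
      using R(3) IH(3,4) U'(3) that by auto
  next
    case False
    then have "M' u v = M1 u v + M2 u v"
      using IH(5) that unfolding U'(1) by blast
    then show ?thesis
      unfolding M'_def by simp
  qed
  show ?case
  proof (rule exI[of _ "\<lambda>u v. R u v + M1 u v"], rule exI[of _ M2], intro conjI)
    show "psd_on (X \<union> Y) (\<lambda>u v. R u v + M1 u v)"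
      using psd_on_add[OF R(1) psd_on_zero_extend[OF IH(1) finU U'(2)]] IH(3)
      unfolding U_def by blast
    show "psd_on (X \<union> Y) M2"
      using psd_on_zero_extend[OF IH(2) finU U'(2)] IH(4) unfolding U_def by blast
    show "\<forall>u v. u \<notin> X \<or> v \<notin> X \<longrightarrow> R u v + M1 u v = 0"
      using R(2) IH(3) unfolding X'_def by auto
  qed (use IH(4) decomp in \<open>auto simp: U_def\<close>)
qed

section \<open>Entrywise maps on complete graphs and clique sums\<close>

lemma PH_complete_iff: "PH I (\<lambda>u v. u \<noteq> v) M \<longleftrightarrow> psd_on I M"
  unfolding PH_def by simp

lemma loewner_superadditive_complete_iff:
  "loewner_superadditive I (\<lambda>u v. u \<noteq> v) f \<longleftrightarrow>
    (\<forall>A B. psd_on I A \<longrightarrow> psd_on I B \<longrightarrow>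
      psd_on I (\<lambda>u v. f (A u v + B u v) - f (A u v) - f (B u v)))"
  unfolding loewner_superadditive_def PH_complete_iff entrywise_def by blast

lemma loewner_superadditive_complete_subset:
  assumes "loewner_superadditive J (\<lambda>u v. u \<noteq> v) f" "finite J" "I \<subseteq> J"
  shows "loewner_superadditive I (\<lambda>u v. u \<noteq> v) f"
  unfolding loewner_superadditive_complete_iff
proof (intro allI impI)
  fix A B :: "_ \<Rightarrow> _ \<Rightarrow> real"
  assume A: "psd_on I A" and B: "psd_on I B"
  define pad where "pad N u v = (if u \<in> I \<and> v \<in> I then N u v else 0)" for N :: "_ \<Rightarrow> _ \<Rightarrow> real" and u v
  have pad: "psd_on J (pad N)" if "psd_on I N" for N
    by (rule psd_on_zero_extend[OF psd_on_cong[OF that] assms(2,3)]) (auto simp: pad_def)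
  have "psd_on J (\<lambda>u v. f (pad A u v + pad B u v) - f (pad A u v) - f (pad B u v))"
    using assms(1) pad[OF A] pad[OF B] unfolding loewner_superadditive_complete_iff by blast
  then have "psd_on I (\<lambda>u v. f (pad A u v + pad B u v) - f (pad A u v) - f (pad B u v))"
    by (rule psd_on_subset[OF _ assms(2,3)])
  then show "psd_on I (\<lambda>u v. f (A u v + B u v) - f (A u v) - f (B u v))"
    by (rule psd_on_cong) (simp add: pad_def)
qed

lemma loewner_superadditive_complete_bij:
  assumes "loewner_superadditive T (\<lambda>u v. u \<noteq> v) f" "bij_betw g S T"
  shows "loewner_superadditive S (\<lambda>u v. u \<noteq> v) f"
  unfolding loewner_superadditive_complete_iff
proof (intro allI impI)
  fix A B :: "_ \<Rightarrow> _ \<Rightarrow> real"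
  assume A: "psd_on S A" and B: "psd_on S B"
  define h where "h = inv_into S g"
  have h: "bij_betw h T S"
    unfolding h_def by (rule bij_betw_inv_into[OF assms(2)])
  have hg: "h (g u) = u" if "u \<in> S" for u
    using assms(2) that unfolding h_def by (simp add: bij_betw_inv_into_left)
  have "psd_on T (\<lambda>i j. f (A (h i) (h j) + B (h i) (h j)) - f (A (h i) (h j)) - f (B (h i) (h j)))"
    using assms(1) psd_on_reindex[OF h A] psd_on_reindex[OF h B]
    unfolding loewner_superadditive_complete_iff by blast
  from psd_on_reindex[OF assms(2) this]
  show "psd_on S (\<lambda>u v. f (A u v + B u v) - f (A u v) - f (B u v))"
    by (rule psd_on_cong) (simp add: hg)
qed

lemma loewner_superadditive_of_card_le:
  assumes "loewner_superadditive {0..<s} complete_adj f" "finite S" "card S \<le> s"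
  shows "loewner_superadditive S (\<lambda>u v. u \<noteq> v) f"
proof -
  have "complete_adj = (\<lambda>i j. i \<noteq> j)"
    by (simp add: complete_adj_def fun_eq_iff)
  then have "loewner_superadditive {0..<s} (\<lambda>u v. u \<noteq> v) f"
    using assms(1) by simp
  moreover have "{0..<card S} \<subseteq> {0..<s}"
    using assms(3) by auto
  ultimately have "loewner_superadditive {0..<card S} (\<lambda>u v. u \<noteq> v) f"
    by (rule loewner_superadditive_complete_subset[OF _ finite_atLeastLessThan])
  moreover obtain g where "bij_betw g S {0..<card S}"
    using ex_bij_betw_finite_nat[OF assms(2)] by blast
  ultimately show ?thesis
    by (rule loewner_superadditive_complete_bij)
qed

lemma preserves_positivity_cong:
  assumes "\<forall>u\<in>I. \<forall>v\<in>I. u \<noteq> v \<longrightarrow> (E u v \<longleftrightarrow> E' u v)"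
  shows "preserves_positivity I E f \<longleftrightarrow> preserves_positivity I E' f"
proof -
  have "PH I E M \<longleftrightarrow> PH I E' M" for M
    unfolding PH_def using assms by blast
  then show ?thesis
    unfolding preserves_positivity_def by simp
qed

text \<open>
  Edges of \<open>E\<close> inside \<open>X\<close> (resp. \<open>Y\<close>) need only be edges of \<open>E1\<close> (resp. \<open>E2\<close>), so \<open>E\<close> may
  be a proper subgraph of the clique sum of the two graphs.
\<close>
definition clique_sum ::
    "'a set \<Rightarrow> 'a set \<Rightarrow> ('a \<Rightarrow> 'a \<Rightarrow> bool) \<Rightarrow> ('a \<Rightarrow> 'a \<Rightarrow> bool) \<Rightarrow> ('a \<Rightarrow> 'a \<Rightarrow> bool) \<Rightarrow> bool"
  where
  "clique_sum X Y E1 E2 E \<longleftrightarrow>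
    (\<forall>u\<in>X \<inter> Y. \<forall>v\<in>X \<inter> Y. u \<noteq> v \<longrightarrow> E1 u v \<and> E2 u v) \<and>
    (\<forall>u\<in>X. \<forall>v\<in>X. u \<noteq> v \<longrightarrow> E u v \<longrightarrow> E1 u v) \<and>
    (\<forall>u\<in>Y. \<forall>v\<in>Y. u \<noteq> v \<longrightarrow> E u v \<longrightarrow> E2 u v) \<and>
    (\<forall>u\<in>X - Y. \<forall>v\<in>Y - X. \<not> E u v)"

lemma PH_clique_sum_split:
  assumes "clique_sum X Y E1 E2 E" "finite X" "finite Y" "PH (X \<union> Y) E M"
  obtains M1 M2 where "PH X E1 M1" "PH Y E2 M2"
    "\<forall>u v. u \<notin> X \<or> v \<notin> X \<longrightarrow> M1 u v = 0" "\<forall>u v. u \<notin> Y \<or> v \<notin> Y \<longrightarrow> M2 u v = 0"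
    "\<forall>u\<in>X \<union> Y. \<forall>v\<in>X \<union> Y. M u v = M1 u v + M2 u v"
proof -
  have clique: "\<forall>u\<in>X \<inter> Y. \<forall>v\<in>X \<inter> Y. u \<noteq> v \<longrightarrow> E1 u v \<and> E2 u v"
    and adj1: "\<forall>u\<in>X. \<forall>v\<in>X. u \<noteq> v \<longrightarrow> E u v \<longrightarrow> E1 u v"
    and adj2: "\<forall>u\<in>Y. \<forall>v\<in>Y. u \<noteq> v \<longrightarrow> E u v \<longrightarrow> E2 u v"
    and no_cross: "\<forall>u\<in>X - Y. \<forall>v\<in>Y - X. \<not> E u v"
    using assms(1) unfolding clique_sum_def by blast+
  have zero: "M u v = 0" if "u \<in> X \<union> Y" "v \<in> X \<union> Y" "u \<noteq> v" "\<not> E u v" for u v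
    using assms(4) that unfolding PH_def by blast
  have "psd_on (X \<union> Y) M"
    using assms(4) unfolding PH_def by blast
  moreover have "\<forall>u\<in>X - Y. \<forall>v\<in>Y - X. M u v = 0"
    using no_cross zero by blast
  ultimately obtain M1 M2 where psd: "psd_on (X \<union> Y) M1" "psd_on (X \<union> Y) M2"
    and supp1: "\<forall>u v. u \<notin> X \<or> v \<notin> X \<longrightarrow> M1 u v = 0"
    and supp2: "\<forall>u v. u \<notin> Y \<or> v \<notin> Y \<longrightarrow> M2 u v = 0"
    and sum: "\<forall>u\<in>X \<union> Y. \<forall>v\<in>X \<union> Y. M u v = M1 u v + M2 u v"
    using psd_on_split[OF assms(2,3)] by blast
  have "PH X E1 M1"
    unfolding PH_def
  proof (intro conjI ballI impI)
    show "psd_on X M1"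
      by (rule psd_on_subset[OF psd(1)]) (use assms(2,3) in auto)
    fix u v
    assume uv: "u \<in> X" "v \<in> X" "u \<noteq> v \<and> \<not> E1 u v"
    then have "M2 u v = 0"
      using clique supp2 by blast
    moreover have "M u v = 0"
      using adj1 zero uv by blast
    ultimately show "M1 u v = 0"
      using sum uv by force
  qed
  moreover have "PH Y E2 M2"
    unfolding PH_def
  proof (intro conjI ballI impI)
    show "psd_on Y M2"
      by (rule psd_on_subset[OF psd(2)]) (use assms(2,3) in auto)
    fix u v
    assume uv: "u \<in> Y" "v \<in> Y" "u \<noteq> v \<and> \<not> E2 u v"
    then have "M1 u v = 0"
      using clique supp1 by blast
    moreover have "M u v = 0"
      using adj2 zero uv by blast
    ultimately show "M2 u v = 0"
      using sum uv by force
  qed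
  ultimately show ?thesis
    using that supp1 supp2 sum by blast
qed

lemma preserves_positivity_clique_sum:
  assumes "clique_sum X Y E1 E2 E" "finite X" "finite Y" "f 0 = 0"
    and "preserves_positivity X E1 f" "preserves_positivity Y E2 f"
    and "loewner_superadditive (X \<inter> Y) (\<lambda>u v. u \<noteq> v) f"
  shows "preserves_positivity (X \<union> Y) E f"
  unfolding preserves_positivity_def
proof (intro allI impI)
  fix M
  assume PM: "PH (X \<union> Y) E M"
  define U where "U = X \<union> Y"
  have finU: "finite U" and XU: "X \<subseteq> U" and YU: "Y \<subseteq> U"
    using assms(2,3) unfolding U_def by auto
  obtain M1 M2 where PH12: "PH X E1 M1" "PH Y E2 M2"
    and supp1: "\<forall>u v. u \<notin> X \<or> v \<notin> X \<longrightarrow> M1 u v = 0"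
    and supp2: "\<forall>u v. u \<notin> Y \<or> v \<notin> Y \<longrightarrow> M2 u v = 0"
    and sum: "\<forall>u\<in>U. \<forall>v\<in>U. M u v = M1 u v + M2 u v"
    using PH_clique_sum_split[OF assms(1-3) PM] unfolding U_def by blast
  have "psd_on X (\<lambda>u v. f (M1 u v))"
    using assms(5) PH12(1) unfolding preserves_positivity_def PH_def entrywise_def by blast
  then have F1: "psd_on U (\<lambda>u v. f (M1 u v))"
    by (rule psd_on_zero_extend[OF _ finU XU]) (use supp1 assms(4) in auto)
  have "psd_on Y (\<lambda>u v. f (M2 u v))"
    using assms(6) PH12(2) unfolding preserves_positivity_def PH_def entrywise_def by blast
  then have F2: "psd_on U (\<lambda>u v. f (M2 u v))"
    by (rule psd_on_zero_extend[OF _ finU YU]) (use supp2 assms(4) in auto)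
  have "psd_on X M1" "psd_on Y M2"
    using PH12 unfolding PH_def by blast+
  then have "psd_on (X \<inter> Y) M1" "psd_on (X \<inter> Y) M2"
    by (auto elim: psd_on_subset intro: assms(2,3))
  then have "psd_on (X \<inter> Y) (\<lambda>u v. f (M1 u v + M2 u v) - f (M1 u v) - f (M2 u v))"
    using assms(7) unfolding loewner_superadditive_complete_iff by blast
  then have F3: "psd_on U (\<lambda>u v. f (M1 u v + M2 u v) - f (M1 u v) - f (M2 u v))"
    by (rule psd_on_zero_extend[OF _ finU]) (use XU supp1 supp2 assms(4) in auto)
  from F1 F2 F3 have "psd_on U (\<lambda>u v. (f (M1 u v) + f (M2 u v)) + (f (M1 u v + M2 u v) - f (M1 u v) - f (M2 u v)))"
    by (intro psd_on_add)
  then have "psd_on U (entrywise f M)"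
    by (rule psd_on_cong) (use sum in \<open>auto simp: entrywise_def\<close>)
  moreover have "\<forall>u\<in>U. \<forall>v\<in>U. u \<noteq> v \<and> \<not> E u v \<longrightarrow> entrywise f M u v = 0"
    using PM assms(4) unfolding PH_def U_def entrywise_def by simp
  ultimately show "PH (X \<union> Y) E (entrywise f M)"
    unfolding PH_def U_def by blast
qed

section \<open>Prime components and perfect orderings\<close>

lemma prime_comps_nonempty: "prime_comps E U P \<Longrightarrow> P \<noteq> {}"
  by (induction rule: prime_comps.induct) auto

lemma prime_comps_Union: "prime_comps E U P \<Longrightarrow> \<Union>P = U"
  by (induction rule: prime_comps.induct) (auto simp: decomposition_def)

lemma decomposition_no_edge:
  assumes "decomposition E U A C B" "x \<in> A" "y \<in> B"
  shows "\<not> E x y"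
proof
  assume "E x y"
  with assms have "is_path E U [x, y]"
    unfolding decomposition_def is_path_def by (auto simp: less_Suc_eq)
  then show False
    using assms unfolding decomposition_def by fastforce
qed

lemma prime_comps_edge:
  assumes "prime_comps E U P" "symp E" "u \<in> U" "v \<in> U" "E u v"
  shows "\<exists>B\<in>P. u \<in> B \<and> v \<in> B"
  using assms
proof (induction arbitrary: u v rule: prime_comps.induct)
  case (base U)
  then show ?case by blast
next
  case (step U A C B P1 P2)
  have no_edge: "\<not> E x y" if "x \<in> A" "y \<in> B" for x y
    using decomposition_no_edge[OF step.hyps(1) that] .
  have "A \<union> C \<union> B = U"
    using step.hyps(1) unfolding decomposition_def by blast
  moreover have "\<not> (u \<in> A \<and> v \<in> B)" "\<not> (u \<in> B \<and> v \<in> A)"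
    using no_edge step.prems(4) sympD[OF step.prems(1,4)] by blast+
  ultimately have "(u \<in> A \<union> C \<and> v \<in> A \<union> C) \<or> (u \<in> B \<union> C \<and> v \<in> B \<union> C)"
    using step.prems(2,3) by blast
  then show ?case
    using step.IH(1)[OF step.prems(1) _ _ step.prems(4)] step.IH(2)[OF step.prems(1) _ _ step.prems(4)]
    by blast
qed

definition block_adj :: "('a \<Rightarrow> 'a \<Rightarrow> bool) \<Rightarrow> 'a set list \<Rightarrow> 'a \<Rightarrow> 'a \<Rightarrow> bool" where
  "block_adj E Bs u v \<longleftrightarrow> E u v \<and> (\<exists>B\<in>set Bs. u \<in> B \<and> v \<in> B)"

lemma sep_set_append: "i < length Bs \<Longrightarrow> sep_set (Bs @ Cs) i = sep_set Bs i"
  unfolding sep_set_def by (auto simp: nth_append)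

lemma sep_set_snoc: "sep_set (Bs @ [B]) (length Bs) = \<Union>(set Bs) \<inter> B"
  unfolding sep_set_def by (auto simp: nth_append in_set_conv_nth intro: nth_mem)

lemma perfect_ordering_prefix:
  assumes "perfect_ordering E (Bs @ Cs)"
  shows "perfect_ordering E Bs"
  unfolding perfect_ordering_def
proof (intro allI impI)
  fix i
  assume i: "i < length Bs"
  then have "clique E (sep_set (Bs @ Cs) i) \<and>
      (0 < i \<longrightarrow> (\<exists>j<i. sep_set (Bs @ Cs) i \<subseteq> (Bs @ Cs) ! j))"
    using assms unfolding perfect_ordering_def by simp
  then show "clique E (sep_set Bs i) \<and> (0 < i \<longrightarrow> (\<exists>j<i. sep_set Bs i \<subseteq> Bs ! j))"
    using i sep_set_append[OF i] by (auto simp: nth_append)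
qed

lemma clique_sum_snoc:
  assumes "perfect_ordering E (Bs @ [B])" "Bs \<noteq> []"
  shows "clique_sum (\<Union>(set Bs)) B (block_adj E Bs) E (block_adj E (Bs @ [B]))"
proof -
  define X where "X = \<Union>(set Bs)"
  have sep: "sep_set (Bs @ [B]) (length Bs) = X \<inter> B"
    unfolding X_def by (rule sep_set_snoc)
  have "clique E (sep_set (Bs @ [B]) (length Bs)) \<and>
      (0 < length Bs \<longrightarrow> (\<exists>j<length Bs. sep_set (Bs @ [B]) (length Bs) \<subseteq> (Bs @ [B]) ! j))"
    using assms(1) unfolding perfect_ordering_def by simp
  then have clique: "clique E (X \<inter> B)" and "\<exists>j<length Bs. X \<inter> B \<subseteq> Bs ! j"
    using assms(2) unfolding sep by (metis length_greater_0_conv nth_append)+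
  then obtain j where j: "j < length Bs" "X \<inter> B \<subseteq> Bs ! j"
    by blast
  have blocks: "set (Bs @ [B]) = insert B (set Bs)"
    by simp
  show ?thesis
    unfolding clique_sum_def X_def[symmetric]
  proof (intro conjI)
    show "\<forall>u\<in>X \<inter> B. \<forall>v\<in>X \<inter> B. u \<noteq> v \<longrightarrow> block_adj E Bs u v \<and> E u v"
      using clique j nth_mem[OF j(1)] unfolding clique_def block_adj_def by blast
    show "\<forall>u\<in>X. \<forall>v\<in>X. u \<noteq> v \<longrightarrow> block_adj E (Bs @ [B]) u v \<longrightarrow> block_adj E Bs u v"
      using j nth_mem[OF j(1)] unfolding block_adj_def blocks by blast
    show "\<forall>u\<in>B. \<forall>v\<in>B. u \<noteq> v \<longrightarrow> block_adj E (Bs @ [B]) u v \<longrightarrow> E u v"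
      unfolding block_adj_def by blast
    show "\<forall>u\<in>X - B. \<forall>v\<in>B - X. \<not> block_adj E (Bs @ [B]) u v"
      unfolding block_adj_def blocks X_def by blast
  qed
qed

lemma preserves_positivity_perfect_ordering:
  assumes "perfect_ordering E Bs" "Bs \<noteq> []" "\<forall>B\<in>set Bs. finite B" "f 0 = 0"
    and "\<forall>B\<in>set Bs. preserves_positivity B E f"
    and "\<forall>i<length Bs. loewner_superadditive (sep_set Bs i) (\<lambda>u v. u \<noteq> v) f"
  shows "preserves_positivity (\<Union>(set Bs)) (block_adj E Bs) f"
  using assms
proof (induction Bs rule: rev_induct)
  case Nil
  then show ?case by simp
next
  case (snoc B Bs)
  show ?case
  proof (cases "Bs = []")
    case True
    have "\<forall>u\<in>B. \<forall>v\<in>B. u \<noteq> v \<longrightarrow> (E u v \<longleftrightarrow> block_adj E [B] u v)"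
      unfolding block_adj_def by simp
    then show ?thesis
      using snoc.prems(5) preserves_positivity_cong[of B E "block_adj E [B]" f] True by simp
  next
    case False
    have "preserves_positivity (\<Union>(set Bs)) (block_adj E Bs) f"
    proof (rule snoc.IH[OF perfect_ordering_prefix[OF snoc.prems(1)] False])
      show "\<forall>i<length Bs. loewner_superadditive (sep_set Bs i) (\<lambda>u v. u \<noteq> v) f"
        using snoc.prems(6) sep_set_append[of _ Bs "[B]"] by (metis length_append_singleton less_SucI)
    qed (use snoc.prems in auto)
    moreover have "loewner_superadditive (\<Union>(set Bs) \<inter> B) (\<lambda>u v. u \<noteq> v) f"
      using snoc.prems(6) sep_set_snoc by (metis length_append_singleton lessI)
    ultimately have "preserves_positivity (\<Union>(set Bs) \<union> B) (block_adj E (Bs @ [B])) f"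
      using preserves_positivity_clique_sum[OF clique_sum_snoc[OF snoc.prems(1) False]] snoc.prems(3-5)
      by simp
    then show ?thesis
      by (simp add: Un_commute)
  qed
qed

lemma preserves_positivity_block_adj_iff:
  assumes "prime_comps E V (set Bs)" "symp E"
  shows "preserves_positivity V (block_adj E Bs) f \<longleftrightarrow> preserves_positivity V E f"
proof (rule preserves_positivity_cong)
  show "\<forall>u\<in>V. \<forall>v\<in>V. u \<noteq> v \<longrightarrow> block_adj E Bs u v = E u v"
    using prime_comps_edge[OF assms] unfolding block_adj_def by blast
qed

theorem theorem4p1:
  fixes V :: "'a set" and E :: "'a \<Rightarrow> 'a \<Rightarrow> bool"
    and Bs :: "'a set list" and f :: "real \<Rightarrow> real"
  assumes "simple_graph V E"
    and "prime_comps E V (set Bs)" and "distinct Bs"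
    and "perfect_ordering E Bs"
    and "f 0 = 0"
    and "\<forall>i<length Bs. preserves_positivity (Bs ! i) E f"
    and "loewner_superadditive {0..<max_sep Bs} complete_adj f"
  shows "preserves_positivity V E f"
proof -
  have cover: "\<Union>(set Bs) = V"
    by (rule prime_comps_Union[OF assms(2)])
  have finite: "\<forall>B\<in>set Bs. finite B"
    using assms(1) cover unfolding simple_graph_def by (meson Union_upper finite_subset)
  have SA: "\<forall>i<length Bs. loewner_superadditive (sep_set Bs i) (\<lambda>u v. u \<noteq> v) f"
  proof (intro allI impI loewner_superadditive_of_card_le[OF assms(7)])
    fix i
    assume "i < length Bs"
    then show "finite (sep_set Bs i)" "card (sep_set Bs i) \<le> max_sep Bs"
      using finite unfolding sep_set_def max_sep_def by (auto intro: Max_ge)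
  qed
  have nonempty: "Bs \<noteq> []"
    using prime_comps_nonempty[OF assms(2)] by auto
  have "\<forall>B\<in>set Bs. preserves_positivity B E f"
    using assms(6) by (auto simp: in_set_conv_nth)
  then have "preserves_positivity V (block_adj E Bs) f"
    using preserves_positivity_perfect_ordering[of E Bs f, OF assms(4) nonempty finite assms(5) _ SA] cover
    by simp
  moreover have "symp E"
    using assms(1) unfolding simple_graph_def by (auto intro: sympI)
  ultimately show ?thesis
    using preserves_positivity_block_adj_iff[OF assms(2)] by simp
qed

end
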